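(* For every odd integer $s\ge3$ there exists a linear $(1,2,s,2)$-AONT.
   Context: A linear $(t_i,t_o,s,q)$-AONT is given by an invertible $s\times s$ matrix $M$ over $\mathbb{F}_q$ defining the map $\mathbf{x}\mapsto\mathbf{y}=\mathbf{x}M^{-1}$ on row vectors of $\mathbb{F}_q^s$, such that for every set $I$ of $t_i$ input coordinates and every set $J$ of $s-t_o$ output coordinates, the pair $((x_i)_{i\in I},(y_j)_{j\in J})$ takes every value in $\mathbb{F}_q^{t_i+s-t_o}$ equally often as $\mathbf{x}$ ranges over $\mathbb{F}_q^s$. Equivalently, $M$ is invertible and every $t_o\times t_i$ submatrix of $M$ has rank $t_i$. *)

theory Defs
  imports Main "HOL-Library.FuncSet"
begin

text \<open>Vectors in F_q^s are modelled as extensional functions on the index set {0..<s};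
  s x s matrices as functions nat => nat => 'a (only entries with indices < s matter).\<close>

definition vecs :: "nat \<Rightarrow> (nat \<Rightarrow> 'a) set" where
  "vecs s = PiE {0..<s} (\<lambda>_. UNIV)"

definition is_inverse_mat :: "nat \<Rightarrow> (nat \<Rightarrow> nat \<Rightarrow> 'a::field) \<Rightarrow> (nat \<Rightarrow> nat \<Rightarrow> 'a) \<Rightarrow> bool" where
  "is_inverse_mat s M N \<longleftrightarrow>
     (\<forall>i<s. \<forall>j<s. (\<Sum>k<s. M i k * N k j) = (if i = j then 1 else 0)) \<and>
     (\<forall>i<s. \<forall>j<s. (\<Sum>k<s. N i k * M k j) = (if i = j then 1 else 0))"

definition vec_mat_mult :: "nat \<Rightarrow> (nat \<Rightarrow> 'a::field) \<Rightarrow> (nat \<Rightarrow> nat \<Rightarrow> 'a) \<Rightarrow> nat \<Rightarrow> 'a" where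
  "vec_mat_mult s x N = (\<lambda>j. if j < s then (\<Sum>k<s. x k * N k j) else undefined)"

definition aont_count :: "nat \<Rightarrow> (nat \<Rightarrow> nat \<Rightarrow> 'a::{finite,field}) \<Rightarrow> nat set \<Rightarrow> nat set
     \<Rightarrow> (nat \<Rightarrow> 'a) \<Rightarrow> (nat \<Rightarrow> 'a) \<Rightarrow> nat" where
  "aont_count s Minv I J a b =
     card {x \<in> vecs s. (\<forall>i\<in>I. x i = a i) \<and> (\<forall>j\<in>J. vec_mat_mult s x Minv j = b j)}"

definition linear_AONT :: "nat \<Rightarrow> nat \<Rightarrow> nat \<Rightarrow> nat \<Rightarrow> (nat \<Rightarrow> nat \<Rightarrow> 'a::{finite,field}) \<Rightarrow> bool" where
  "linear_AONT t_i t_o s q M \<longleftrightarrow>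
     card (UNIV :: 'a set) = q \<and>
     (\<exists>Minv. is_inverse_mat s M Minv \<and>
       (\<forall>I J. I \<subseteq> {0..<s} \<longrightarrow> card I = t_i \<longrightarrow> J \<subseteq> {0..<s} \<longrightarrow> card J = s - t_o \<longrightarrow>
          (\<forall>a b a' b'. aont_count s Minv I J a b = aont_count s Minv I J a' b')))"

end

theory Submission
  imports Defs
begin

text \<open>Any invertible matrix M none of whose columns has two zero entries is a linear
  (1,2)-AONT. Indeed, fix an input position i and output positions J with exactly two positions
  c, c' outside J. Writing x = y M, prescribing y on J and choosing y at whichever of c, c'
  has M c i \<noteq> 0 solves x_i = a, (x M^{-1})_J = b for every right-hand side, and the solution
  sets for different right-hand sides are translates of each other, hence equinumerous.
  Over F_2 with s odd, the all-ones matrix with zeros at the diagonal positions (k,k), k \<ge> 1,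
  has this property; its inverse has ones exactly in row 0, in column 0 and on the diagonal,
  the parity of s entering through the row and column sums.\<close>

lemma two_eq_zero_if_card_UNIV_2:
  assumes "card (UNIV :: 'a::{finite,field} set) = 2"
  shows "(2::'a) = 0"
proof (rule ccontr)
  assume "(2::'a) \<noteq> 0"
  moreover have "(2::'a) \<noteq> 1"
    by (metis add_left_cancel add_0_right one_add_one zero_neq_one)
  ultimately have "card {0::'a, 1, 2} = 3" by simp
  moreover have "card {0::'a, 1, 2} \<le> card (UNIV :: 'a set)" by (rule card_mono) auto
  ultimately show False using assms by simp
qed

lemma of_nat_char_2:
  assumes "(2::'a::semiring_1) = 0"
  shows "(of_nat n :: 'a) = (if even n then 0 else 1)"
proof (induction n)
  case (Suc n)
  then show ?case using assms by simp
qed simp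

lemma sum_if_eq_else_const:
  fixes c d :: "'a::comm_ring_1"
  assumes "i < s"
  shows "(\<Sum>k<s. if k = i then c else d) = c + of_nat (s - 1) * d"
proof -
  have "(\<Sum>k<s. if k = i then c else d) = (\<Sum>k<s. (if k = i then c - d else 0) + d)"
    by (rule sum.cong) auto
  also have "\<dots> = (c - d) + of_nat s * d" using assms by (simp add: sum.distrib)
  also have "\<dots> = c + of_nat (s - 1) * d" using assms by (cases s) (auto simp: algebra_simps)
  finally show ?thesis .
qed

lemma sum_if_eq_either:
  fixes f :: "nat \<Rightarrow> 'a::comm_monoid_add"
  assumes "p < s" "r < s" "p \<noteq> r"
  shows "(\<Sum>k<s. if k = p \<or> k = r then f k else 0) = f p + f r"
proof -
  have "(\<Sum>k<s. if k = p \<or> k = r then f k else 0)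
      = (\<Sum>k<s. (if k = p then f k else 0) + (if k = r then f k else 0))"
    by (rule sum.cong) (use assms in auto)
  also have "\<dots> = f p + f r" using assms by (simp add: sum.distrib)
  finally show ?thesis .
qed

lemma vec_mat_mult_in_vecs: "vec_mat_mult s x N \<in> vecs s"
  by (auto simp: vecs_def vec_mat_mult_def PiE_iff extensional_def)

lemma vec_mat_mult_restrict: "vec_mat_mult s (restrict x {0..<s}) N = vec_mat_mult s x N"
  by (auto simp: vec_mat_mult_def intro!: sum.cong)

lemma vec_mat_mult_add:
  "j < s \<Longrightarrow> vec_mat_mult s (\<lambda>k. x k + z k) N j = vec_mat_mult s x N j + vec_mat_mult s z N j"
  by (simp add: vec_mat_mult_def sum.distrib distrib_right)

lemma vec_mat_mult_diff:
  "j < s \<Longrightarrow> vec_mat_mult s (\<lambda>k. x k - z k) N j = vec_mat_mult s x N j - vec_mat_mult s z N j"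
  by (simp add: vec_mat_mult_def sum_subtractf left_diff_distrib)

lemma vec_mat_mult_inverse:
  assumes "is_inverse_mat s M N" "j < s"
  shows "vec_mat_mult s (vec_mat_mult s y M) N j = y j"
proof -
  have "vec_mat_mult s (vec_mat_mult s y M) N j = (\<Sum>k<s. \<Sum>l<s. y l * (M l k * N k j))"
    using assms(2) by (simp add: vec_mat_mult_def sum_distrib_right mult.assoc)
  also have "\<dots> = (\<Sum>l<s. y l * (\<Sum>k<s. M l k * N k j))"
    by (subst sum.swap) (simp add: sum_distrib_left)
  also have "\<dots> = (\<Sum>l<s. if l = j then y l else 0)"
    using assms unfolding is_inverse_mat_def by (intro sum.cong) auto
  also have "\<dots> = y j" using assms(2) by simp
  finally show ?thesis .
qed

lemma aont_count_eq_homogeneous: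
  fixes N :: "nat \<Rightarrow> nat \<Rightarrow> 'a::{finite,field}"
  assumes "I \<subseteq> {0..<s}" "J \<subseteq> {0..<s}"
    and "x\<^sub>0 \<in> vecs s" "\<forall>i\<in>I. x\<^sub>0 i = a i" "\<forall>j\<in>J. vec_mat_mult s x\<^sub>0 N j = b j"
  shows "aont_count s N I J a b = aont_count s N I J (\<lambda>_. 0) (\<lambda>_. 0)"
proof -
  let ?S = "{x \<in> vecs s. (\<forall>i\<in>I. x i = a i) \<and> (\<forall>j\<in>J. vec_mat_mult s x N j = b j)}"
  let ?T = "{x \<in> vecs s. (\<forall>i\<in>I. x i = 0) \<and> (\<forall>j\<in>J. vec_mat_mult s x N j = 0)}"
  have "bij_betw (\<lambda>x. restrict (\<lambda>k. x k - x\<^sub>0 k) {0..<s}) ?S ?T"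
  proof (rule bij_betw_byWitness[where f' = "\<lambda>x. restrict (\<lambda>k. x k + x\<^sub>0 k) {0..<s}"])
    show "\<forall>x\<in>?S. restrict (\<lambda>k. restrict (\<lambda>k. x k - x\<^sub>0 k) {0..<s} k + x\<^sub>0 k) {0..<s} = x"
      by (auto simp: vecs_def PiE_iff extensional_def fun_eq_iff)
    show "\<forall>x\<in>?T. restrict (\<lambda>k. restrict (\<lambda>k. x k + x\<^sub>0 k) {0..<s} k - x\<^sub>0 k) {0..<s} = x"
      by (auto simp: vecs_def PiE_iff extensional_def fun_eq_iff)
  qed (use assms in \<open>auto simp: vecs_def vec_mat_mult_restrict vec_mat_mult_add vec_mat_mult_diff\<close>)
  then show ?thesis unfolding aont_count_def by (rule bij_betw_same_card)
qed

lemma aont_count_eq_if_solvable: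
  fixes N :: "nat \<Rightarrow> nat \<Rightarrow> 'a::{finite,field}"
  assumes "I \<subseteq> {0..<s}" "J \<subseteq> {0..<s}"
    and "\<And>a b. \<exists>x\<in>vecs s. (\<forall>i\<in>I. x i = a i) \<and> (\<forall>j\<in>J. vec_mat_mult s x N j = b j)"
  shows "aont_count s N I J a b = aont_count s N I J a' b'"
  using aont_count_eq_homogeneous[OF assms(1,2)] assms(3)[of a b] assms(3)[of a' b'] by metis

lemma solvable_single_input:
  fixes M N :: "nat \<Rightarrow> nat \<Rightarrow> 'a::field"
  assumes inv: "is_inverse_mat s M N" and "J \<subseteq> {0..<s}" "i < s"
    and c: "c < s" "c \<notin> J" "M c i \<noteq> 0"
  shows "\<exists>x\<in>vecs s. x i = a \<and> (\<forall>j\<in>J. vec_mat_mult s x N j = b j)"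
proof -
  define y\<^sub>0 where "y\<^sub>0 = restrict (\<lambda>k. if k \<in> J then b k else 0) {0..<s}"
  define t where "t = (a - (\<Sum>k<s. y\<^sub>0 k * M k i)) / M c i"
  define y where "y = restrict (\<lambda>k. y\<^sub>0 k + (if k = c then t else 0)) {0..<s}"
  have "(\<Sum>k<s. y k * M k i) = (\<Sum>k<s. y\<^sub>0 k * M k i + (if k = c then t * M c i else 0))"
    by (intro sum.cong) (auto simp: y_def distrib_right)
  also have "\<dots> = a" using c by (simp add: sum.distrib t_def)
  finally have "vec_mat_mult s y M i = a" using \<open>i < s\<close> by (simp add: vec_mat_mult_def)
  moreover have "vec_mat_mult s (vec_mat_mult s y M) N j = b j" if "j \<in> J" for j
    using that assms vec_mat_mult_inverse[OF inv] by (auto simp: y_def y\<^sub>0_def)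
  ultimately show ?thesis using vec_mat_mult_in_vecs by blast
qed

lemma linear_AONT_1_2I:
  fixes M N :: "nat \<Rightarrow> nat \<Rightarrow> 'a::{finite,field}"
  assumes "card (UNIV :: 'a set) = q" and inv: "is_inverse_mat s M N" and "2 \<le> s"
    and zeros: "\<And>i c c'. i < s \<Longrightarrow> c < s \<Longrightarrow> c' < s \<Longrightarrow> M c i = 0 \<Longrightarrow> M c' i = 0 \<Longrightarrow> c = c'"
  shows "linear_AONT 1 2 s q M"
  unfolding linear_AONT_def
proof (intro conjI exI[of _ N] allI impI)
  fix I J :: "nat set" and a b a' b' :: "nat \<Rightarrow> 'a"
  assume I: "I \<subseteq> {0..<s}" "card I = 1" and J: "J \<subseteq> {0..<s}" "card J = s - 2"
  obtain i where "I = {i}" "i < s" using I by (auto simp: card_1_singleton_iff)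
  have "card ({0..<s} - J) = 2" using J \<open>2 \<le> s\<close> finite_subset[OF J(1)] by (simp add: card_Diff_subset)
  then obtain c c' where "c \<in> {0..<s} - J" "c' \<in> {0..<s} - J" "c \<noteq> c'"
    by (metis card_2_iff insertI1 insertI2)
  then obtain c where "c < s" "c \<notin> J" "M c i \<noteq> 0"
    using zeros[OF \<open>i < s\<close>] by (metis Diff_iff atLeastLessThan_iff)
  then show "aont_count s N I J a b = aont_count s N I J a' b'"
    using solvable_single_input[OF inv J(1) \<open>i < s\<close>] \<open>I = {i}\<close>
    by (intro aont_count_eq_if_solvable I(1) J(1)) simp
qed (use assms in auto)

definition aont_mat :: "nat \<Rightarrow> nat \<Rightarrow> 'a::field" where
  "aont_mat k j = (if j \<noteq> 0 \<and> k = j then 0 else 1)"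

definition aont_mat_inv :: "nat \<Rightarrow> nat \<Rightarrow> 'a::field" where
  "aont_mat_inv k j = (if j = 0 \<or> k = 0 \<or> k = j then 1 else 0)"

lemma aont_mat_eq_0_iff: "aont_mat k j = 0 \<longleftrightarrow> j \<noteq> 0 \<and> k = j"
  by (simp add: aont_mat_def)

lemma aont_mat_sym: "aont_mat k j = aont_mat j k"
  by (auto simp: aont_mat_def)

lemma aont_mat_inv_sym: "aont_mat_inv k j = aont_mat_inv j k"
  by (auto simp: aont_mat_inv_def)

lemma is_inverse_aont_mat:
  assumes char_2: "(2::'a::field) = 0" and "odd s"
  shows "is_inverse_mat s (aont_mat :: nat \<Rightarrow> nat \<Rightarrow> 'a) aont_mat_inv"
proof -
  have of_nat_s: "(of_nat s :: 'a) = 1" using of_nat_char_2[OF char_2, of s] \<open>odd s\<close> by simp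
  have row_sum: "(\<Sum>k<s. aont_mat i k) = (if i = 0 then 1 else (0::'a))" if "i < s" for i
  proof (cases "i = 0")
    case True
    then have "(\<Sum>k<s. aont_mat i k) = (\<Sum>k<s. (1::'a))"
      by (intro sum.cong) (auto simp: aont_mat_def)
    then show ?thesis using True of_nat_s by simp
  next
    case False
    then have "(\<Sum>k<s. aont_mat i k) = (\<Sum>k<s. if k = i then 0 else (1::'a))"
      by (intro sum.cong) (auto simp: aont_mat_def)
    then show ?thesis
      using sum_if_eq_else_const[OF that, of "0::'a" 1] that False by (simp add: of_nat_s)
  qed
  have right_inverse: "(\<Sum>k<s. aont_mat i k * aont_mat_inv k j) = (if i = j then 1 else (0::'a))"
    if "i < s" "j < s" for i j
  proof (cases "j = 0")
    case True
    then show ?thesis using row_sum[OF \<open>i < s\<close>] by (simp add: aont_mat_inv_def)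
  next
    case False
    have "(\<Sum>k<s. aont_mat i k * aont_mat_inv k j)
        = (\<Sum>k<s. if k = 0 \<or> k = j then aont_mat i k else (0::'a))"
      using False by (intro sum.cong) (auto simp: aont_mat_inv_def)
    also have "\<dots> = aont_mat i 0 + aont_mat i j"
      using False that by (intro sum_if_eq_either) auto
    finally show ?thesis using False char_2 by (auto simp: aont_mat_def)
  qed
  moreover have "(\<Sum>k<s. aont_mat_inv i k * aont_mat k j) = (if i = j then 1 else (0::'a))"
    if "i < s" "j < s" for i j
    using right_inverse[OF that(2,1)]
    by (simp add: aont_mat_sym[of _ j] aont_mat_inv_sym[of i] mult.commute eq_commute)
  ultimately show ?thesis unfolding is_inverse_mat_def by blast
qed

theorem mainTheorem11:
  fixes s :: nat
  assumes "card (UNIV :: 'a::{finite,field} set) = 2"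
    and "odd s" and "s \<ge> 3"
  shows "\<exists>M :: nat \<Rightarrow> nat \<Rightarrow> 'a. linear_AONT 1 2 s 2 M"
proof -
  have "is_inverse_mat s (aont_mat :: nat \<Rightarrow> nat \<Rightarrow> 'a) aont_mat_inv"
    using is_inverse_aont_mat two_eq_zero_if_card_UNIV_2 assms(1,2) by blast
  then have "linear_AONT 1 2 s 2 (aont_mat :: nat \<Rightarrow> nat \<Rightarrow> 'a)"
    using assms(1,3) by (intro linear_AONT_1_2I) (auto simp: aont_mat_eq_0_iff)
  then show ?thesis by blast
qed

end
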